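(* Let $p,l\in\mathbb{Z}_{\geq 0}$. For every $M\in\mathrm{Sym}_\infty^{p}$ with $\mathrm{rk}(M)\geq p2^pl$, the image of the orbit $G_\infty M$ under the projection $\mathrm{Sym}_\infty^{p}\to\mathrm{Sym}_l^{p}$ (taking upper-left $l\times l$ blocks) is Zariski dense in $\mathrm{Sym}_l^{p}$.
   Context: $\mathrm{Sym}_\infty$ is the space of symmetric complex $\mathbb{N}\times\mathbb{N}$ matrices, viewed as linear maps from finitely supported sequences $\mathbb{C}^\infty_{\mathrm{fin}}$ to all sequences $\mathbb{C}^\infty$; $\mathrm{Sym}_l$ is the space of symmetric complex $l\times l$ matrices. $G_\infty=\bigcup_k\mathrm{GL}_k(\mathbb{C})$ (embedded via $g\mapsto\mathrm{diag}(g,\mathrm{Id})$) acts on $\mathrm{Sym}_\infty^p$ by $g\cdot(M_1,\dots,M_p)=(gM_1g^T,\dots,gM_pg^T)$. Rank of a tuple: for $M=(M_1,\dots,M_s)\in\mathrm{Hom}(V,W)^s$, $\mathrm{rk}(M)$ is the infimum of $\mathrm{rk}(\sum_i\lambda_iM_i)\in\mathbb{Z}_{\ge0}\cup\{\infty\}$ over all nonzero $(\lambda_1,\dots,\lambda_s)\in\mathbb{C}^s$ (so $\mathrm{rk}(M)=\infty$ if $s=0$). *)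

theory Defs
  imports Complex_Main "HOL-Library.Extended_Nat" "HOL-Library.Function_Algebras"
begin

definition fscale :: "complex \<Rightarrow> (nat \<Rightarrow> complex) \<Rightarrow> (nat \<Rightarrow> complex)" where
  "fscale c f = (\<lambda>i. c * f i)"

definition mat_image :: "(nat \<Rightarrow> nat \<Rightarrow> complex) \<Rightarrow> (nat \<Rightarrow> complex) set" where
  "mat_image A = {(\<lambda>i. \<Sum>j\<in>{j. x j \<noteq> 0}. A i j * x j) | x. finite {j. x j \<noteq> 0}}"

definition mat_rank :: "(nat \<Rightarrow> nat \<Rightarrow> complex) \<Rightarrow> enat" where
  "mat_rank A = (if \<exists>B. finite B \<and> \<not> module.dependent fscale B
                        \<and> module.span fscale B = mat_image A
                 then enat (vector_space.dim fscale (mat_image A)) else \<infinity>)"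

text \<open>Rank of a p-tuple M(0),...,M(p-1): infimum over nonzero coefficient vectors
  (infimum of the empty set is infinity, case p = 0).\<close>
definition tuple_rank :: "nat \<Rightarrow> (nat \<Rightarrow> nat \<Rightarrow> nat \<Rightarrow> complex) \<Rightarrow> enat" where
  "tuple_rank p M = (INF lam \<in> {lam :: nat \<Rightarrow> complex. \<exists>k<p. lam k \<noteq> 0}.
                       mat_rank (\<lambda>i j. \<Sum>k<p. lam k * M k i j))"

definition sym_inf :: "(nat \<Rightarrow> nat \<Rightarrow> complex) set" where
  "sym_inf = {A. \<forall>i j. A i j = A j i}"

definition sym_inf_tuples :: "nat \<Rightarrow> (nat \<Rightarrow> nat \<Rightarrow> nat \<Rightarrow> complex) set" where
  "sym_inf_tuples p = {M. (\<forall>k<p. M k \<in> sym_inf) \<and> (\<forall>k\<ge>p. \<forall>i j. M k i j = 0)}"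

definition sym_l_tuples :: "nat \<Rightarrow> nat \<Rightarrow> (nat \<Rightarrow> nat \<Rightarrow> nat \<Rightarrow> complex) set" where
  "sym_l_tuples p l = {X. (\<forall>k i j. X k i j = X k j i)
                        \<and> (\<forall>k i j. \<not> (k < p \<and> i < l \<and> j < l) \<longrightarrow> X k i j = 0)}"

text \<open>G_infinity = union of GL_n(C) embedded via g |-> diag(g, Id).\<close>
definition embed_gl :: "nat \<Rightarrow> (nat \<Rightarrow> nat \<Rightarrow> complex) \<Rightarrow> (nat \<Rightarrow> nat \<Rightarrow> complex)" where
  "embed_gl n g = (\<lambda>i j. if i < n \<and> j < n then g i j else if i = j then 1 else 0)"

definition invertible_n :: "nat \<Rightarrow> (nat \<Rightarrow> nat \<Rightarrow> complex) \<Rightarrow> bool" where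
  "invertible_n n g \<longleftrightarrow> (\<exists>h. \<forall>i<n. \<forall>j<n.
      (\<Sum>k<n. g i k * h k j) = (if i = j then 1 else 0) \<and>
      (\<Sum>k<n. h i k * g k j) = (if i = j then 1 else 0))"

definition G_inf :: "(nat \<Rightarrow> nat \<Rightarrow> complex) set" where
  "G_inf = {embed_gl n g | n g. invertible_n n g}"

text \<open>g A g^T; g has finitely many nonzero entries in every row, so the sums are finite.\<close>
definition congr_act :: "(nat \<Rightarrow> nat \<Rightarrow> complex) \<Rightarrow> (nat \<Rightarrow> nat \<Rightarrow> complex) \<Rightarrow> (nat \<Rightarrow> nat \<Rightarrow> complex)" where
  "congr_act g A = (\<lambda>i j. \<Sum>a\<in>{a. g i a \<noteq> 0}. \<Sum>b\<in>{b. g j b \<noteq> 0}. g i a * A a b * g j b)"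

definition orbit :: "nat \<Rightarrow> (nat \<Rightarrow> nat \<Rightarrow> nat \<Rightarrow> complex) \<Rightarrow> (nat \<Rightarrow> nat \<Rightarrow> nat \<Rightarrow> complex) set" where
  "orbit p M = {(\<lambda>k. if k < p then congr_act g (M k) else (\<lambda>i j. 0)) | g. g \<in> G_inf}"

definition proj_block :: "nat \<Rightarrow> nat \<Rightarrow> (nat \<Rightarrow> nat \<Rightarrow> nat \<Rightarrow> complex) \<Rightarrow> (nat \<Rightarrow> nat \<Rightarrow> nat \<Rightarrow> complex)" where
  "proj_block p l M = (\<lambda>k i j. if k < p \<and> i < l \<and> j < l then M k i j else 0)"

inductive_set poly_fun :: "((nat \<Rightarrow> nat \<Rightarrow> nat \<Rightarrow> complex) \<Rightarrow> complex) set" where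
  const: "(\<lambda>X. c) \<in> poly_fun"
| coord: "(\<lambda>X. X k i j) \<in> poly_fun"
| add: "f \<in> poly_fun \<Longrightarrow> g \<in> poly_fun \<Longrightarrow> (\<lambda>X. f X + g X) \<in> poly_fun"
| mult: "f \<in> poly_fun \<Longrightarrow> g \<in> poly_fun \<Longrightarrow> (\<lambda>X. f X * g X) \<in> poly_fun"

definition zariski_dense_in :: "(nat \<Rightarrow> nat \<Rightarrow> nat \<Rightarrow> complex) set \<Rightarrow> (nat \<Rightarrow> nat \<Rightarrow> nat \<Rightarrow> complex) set \<Rightarrow> bool" where
  "zariski_dense_in S V \<longleftrightarrow> S \<subseteq> V \<and> (\<forall>f\<in>poly_fun. (\<forall>X\<in>S. f X = 0) \<longrightarrow> (\<forall>X\<in>V. f X = 0))"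

end

theory Submission
  imports Defs
begin

text \<open>The projected orbit point of \<open>g \<in> G\<^sub>\<infinity>\<close> records the values \<open>M\<^sub>k(g\<^sub>i, g\<^sub>j)\<close> of the forms on the
  first \<open>l\<close> rows of \<open>g\<close>. Rows \<open>b\<^sub>i + e w\<^sub>i\<close> with fresh unit vectors \<open>w\<^sub>i\<close> keep \<open>g\<close> invertible,
  and these points tend to \<open>(M\<^sub>k(b\<^sub>i, b\<^sub>j))\<close> as \<open>e \<rightarrow> 0\<close>; as polynomials are continuous, it
  suffices to realize every \<open>X \<in> Sym\<^sub>l\<^sup>p\<close> exactly as such Gram data. Writing each \<open>X\<^sub>k = C\<^sub>k\<^sup>T C\<^sub>k\<close>,
  this reduces to finding \<open>p l\<close> vectors \<open>u\<^sub>k\<^sub>l\<^sub>+\<^sub>s\<close>, orthogonal for every \<open>M\<^sub>k\<^sub>'\<close>, with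
  \<open>M\<^sub>k\<^sub>'(u\<^sub>k\<^sub>l\<^sub>+\<^sub>s, u\<^sub>k\<^sub>l\<^sub>+\<^sub>s) = \<delta>\<^sub>k\<^sub>k\<^sub>'\<close>. They are chosen one at a time in the joint orthogonal
  complement \<open>W\<close> of the earlier ones: a nontrivial combination \<open>\<Sum> \<mu>\<^sub>k M\<^sub>k\<close> isotropic on \<open>W\<close>
  would have rank at most \<open>2p - 1\<close> times the number of earlier vectors, which the rank
  hypothesis forbids; isotropy for the other \<open>p - 1\<close> forms is then arranged by mixing two
  such vectors, one form at a time.\<close>

section \<open>Finitely supported sequences and bilinear forms\<close>

interpretation seq: vector_space fscale
  by unfold_locales (auto simp: fscale_def fun_eq_iff algebra_simps)

definition supp :: "(nat \<Rightarrow> complex) \<Rightarrow> nat set" where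
  "supp x = {j. x j \<noteq> 0}"

abbreviation finsupp :: "(nat \<Rightarrow> complex) \<Rightarrow> bool" where
  "finsupp x \<equiv> finite (supp x)"

text \<open>\<open>dot a x\<close> is the pairing \<open>\<Sum>\<^sub>j a\<^sub>j x\<^sub>j\<close> only for finitely supported \<open>x\<close> (a sum over an
  infinite set is \<open>0\<close>); the same applies to \<open>mat_vec\<close> and \<open>bform\<close>.\<close>

definition dot :: "(nat \<Rightarrow> complex) \<Rightarrow> (nat \<Rightarrow> complex) \<Rightarrow> complex" where
  "dot a x = (\<Sum>j\<in>supp x. a j * x j)"

definition mat_vec :: "(nat \<Rightarrow> nat \<Rightarrow> complex) \<Rightarrow> (nat \<Rightarrow> complex) \<Rightarrow> nat \<Rightarrow> complex" where
  "mat_vec A x = (\<lambda>i. dot (A i) x)"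

definition bform :: "(nat \<Rightarrow> nat \<Rightarrow> complex) \<Rightarrow> (nat \<Rightarrow> complex) \<Rightarrow> (nat \<Rightarrow> complex) \<Rightarrow> complex" where
  "bform A x y = (\<Sum>i\<in>supp x. \<Sum>j\<in>supp y. x i * A i j * y j)"

definition unit_vec :: "nat \<Rightarrow> nat \<Rightarrow> complex" where
  "unit_vec j = (\<lambda>i. if i = j then 1 else 0)"

lemma sum_fun_apply: "(sum f A) i = (\<Sum>a\<in>A. f a i)"
  by (induction A rule: infinite_finite_induct) auto

lemma sum_delta_mult:
  fixes f :: "'b \<Rightarrow> 'a::semiring_1"
  shows "finite A \<Longrightarrow> (\<Sum>k\<in>A. (if k = a then 1 else 0) * f k) = (if a \<in> A then f a else 0)"
  by (induction A rule: finite_induct) auto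

lemma fscale_apply: "fscale c x i = c * x i"
  by (simp add: fscale_def)

lemma supp_add: "supp (x + y) \<subseteq> supp x \<union> supp y"
  by (auto simp: supp_def)

lemma supp_diff: "supp (x - y) \<subseteq> supp x \<union> supp y"
  by (auto simp: supp_def)

lemma supp_scale: "supp (fscale c x) \<subseteq> supp x"
  by (auto simp: supp_def fscale_apply)

lemma supp_sum: "supp (sum f A) \<subseteq> (\<Union>a\<in>A. supp (f a))"
  by (induction A rule: infinite_finite_induct) (auto simp: supp_def)

lemma supp_zero [simp]: "supp 0 = {}"
  by (simp add: supp_def)

lemma supp_unit_vec [simp]: "supp (unit_vec j) = {j}"
  by (auto simp: supp_def unit_vec_def)

lemma finsupp_add [intro, simp]: "finsupp x \<Longrightarrow> finsupp y \<Longrightarrow> finsupp (x + y)"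
  by (meson finite_Un finite_subset supp_add)

lemma finsupp_diff [intro, simp]: "finsupp x \<Longrightarrow> finsupp y \<Longrightarrow> finsupp (x - y)"
  by (meson finite_Un finite_subset supp_diff)

lemma finsupp_scale [intro, simp]: "finsupp x \<Longrightarrow> finsupp (fscale c x)"
  by (meson finite_subset supp_scale)

lemma finsupp_sum [intro]: "finite A \<Longrightarrow> (\<And>a. a \<in> A \<Longrightarrow> finsupp (f a)) \<Longrightarrow> finsupp (sum f A)"
  by (rule finite_subset[OF supp_sum]) auto

lemma dot_eq: "finite S \<Longrightarrow> supp x \<subseteq> S \<Longrightarrow> dot a x = (\<Sum>j\<in>S. a j * x j)"
  unfolding dot_def by (rule sum.mono_neutral_left) (auto simp: supp_def)

lemma dot_zero [simp]: "dot a 0 = 0"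
  by (simp add: dot_def)

lemma dot_add: "finsupp x \<Longrightarrow> finsupp y \<Longrightarrow> dot a (x + y) = dot a x + dot a y"
  using supp_add[of x y] by (simp add: dot_eq[of "supp x \<union> supp y"] sum.distrib algebra_simps)

lemma dot_diff: "finsupp x \<Longrightarrow> finsupp y \<Longrightarrow> dot a (x - y) = dot a x - dot a y"
  using supp_diff[of x y] by (simp add: dot_eq[of "supp x \<union> supp y"] sum_subtractf algebra_simps)

lemma dot_scale: "finsupp x \<Longrightarrow> dot a (fscale c x) = c * dot a x"
  using supp_scale[of c x] by (simp add: dot_eq[of "supp x"] sum_distrib_left algebra_simps fscale_apply)

lemma dot_sum:
  "finite B \<Longrightarrow> (\<And>b. b \<in> B \<Longrightarrow> finsupp (f b)) \<Longrightarrow> dot a (sum f B) = (\<Sum>b\<in>B. dot a (f b))"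
proof (induction B rule: finite_induct)
  case (insert b B)
  have "finsupp (sum f B)"
    using insert by (intro finsupp_sum) auto
  then have "dot a (f b + sum f B) = dot a (f b) + (\<Sum>b\<in>B. dot a (f b))"
    using insert by (simp add: dot_add)
  then show ?case
    by (simp only: sum.insert[OF insert.hyps])
qed (simp add: dot_def supp_def)

lemma dot_diff_left: "dot (a - b) x = dot a x - dot b x"
  by (simp add: dot_def sum_subtractf algebra_simps)

lemma dot_sum_left: "dot (sum f B) x = (\<Sum>b\<in>B. dot (f b) x)"
  by (simp add: dot_def sum_fun_apply sum_distrib_right) (rule sum.swap)

lemma dot_scale_left: "dot (fscale c a) x = c * dot a x"
  by (simp add: dot_def sum_distrib_left algebra_simps fscale_apply)

lemma dot_unit_vec [simp]: "dot a (unit_vec j) = a j"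
  by (simp add: dot_def) (simp add: unit_vec_def)

lemma mat_vec_add: "finsupp x \<Longrightarrow> finsupp y \<Longrightarrow> mat_vec A (x + y) = mat_vec A x + mat_vec A y"
  by (simp add: mat_vec_def dot_add fun_eq_iff)

lemma mat_vec_diff: "finsupp x \<Longrightarrow> finsupp y \<Longrightarrow> mat_vec A (x - y) = mat_vec A x - mat_vec A y"
  by (simp add: mat_vec_def dot_diff fun_eq_iff)

lemma mat_vec_scale: "finsupp x \<Longrightarrow> mat_vec A (fscale c x) = fscale c (mat_vec A x)"
  by (simp add: mat_vec_def dot_scale fun_eq_iff fscale_apply)

lemma mat_vec_sum:
  "finite B \<Longrightarrow> (\<And>b. b \<in> B \<Longrightarrow> finsupp (f b)) \<Longrightarrow> mat_vec A (sum f B) = (\<Sum>b\<in>B. mat_vec A (f b))"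
  by (simp add: mat_vec_def dot_sum fun_eq_iff sum_fun_apply)

lemma mat_vec_lincomb:
  "mat_vec (\<lambda>i j. \<Sum>k<p. mu k * M k i j) x = (\<Sum>k<p. fscale (mu k) (mat_vec (M k) x))"
proof
  fix i
  have "mat_vec (\<lambda>i j. \<Sum>k<p. mu k * M k i j) x i = (\<Sum>j\<in>supp x. \<Sum>k<p. mu k * (M k i j * x j))"
    by (simp add: mat_vec_def dot_def sum_distrib_left mult_ac)
  also have "\<dots> = (\<Sum>k<p. \<Sum>j\<in>supp x. mu k * (M k i j * x j))"
    by (rule sum.swap)
  finally show "mat_vec (\<lambda>i j. \<Sum>k<p. mu k * M k i j) x i = (\<Sum>k<p. fscale (mu k) (mat_vec (M k) x)) i"
    by (simp add: sum_fun_apply fscale_apply mat_vec_def dot_def sum_distrib_left)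
qed

lemma mat_image_eq: "mat_image A = {mat_vec A x | x. finsupp x}"
  by (simp add: mat_image_def mat_vec_def dot_def supp_def)

lemma dot_mat_vec: "dot (mat_vec A y) x = bform A x y"
  by (simp add: dot_def mat_vec_def bform_def sum_distrib_left sum_distrib_right mult_ac)

lemma bform_sym: "(\<And>i j. A i j = A j i) \<Longrightarrow> bform A x y = bform A y x"
  unfolding bform_def by (subst sum.swap) (auto intro!: sum.cong simp: algebra_simps)

lemma bform_zero_right [simp]: "bform A x 0 = 0"
  by (simp add: bform_def)

lemma bform_add_left:
  "finsupp x \<Longrightarrow> finsupp x' \<Longrightarrow> bform A (x + x') y = bform A x y + bform A x' y"
  by (simp flip: dot_mat_vec add: dot_add)

lemma bform_add_right:
  "finsupp y \<Longrightarrow> finsupp y' \<Longrightarrow> bform A x (y + y') = bform A x y + bform A x y'"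
  by (simp flip: dot_mat_vec add: mat_vec_add dot_def sum.distrib distrib_right)

lemma bform_diff_right:
  "finsupp y \<Longrightarrow> finsupp y' \<Longrightarrow> bform A x (y - y') = bform A x y - bform A x y'"
  by (simp flip: dot_mat_vec add: mat_vec_diff dot_diff_left)

lemma bform_scale_left: "finsupp x \<Longrightarrow> bform A (fscale c x) y = c * bform A x y"
  by (simp flip: dot_mat_vec add: dot_scale)

lemma bform_scale_right: "finsupp y \<Longrightarrow> bform A x (fscale c y) = c * bform A x y"
  by (simp flip: dot_mat_vec add: mat_vec_scale dot_scale_left)

lemma bform_sum_left:
  "finite B \<Longrightarrow> (\<And>b. b \<in> B \<Longrightarrow> finsupp (f b)) \<Longrightarrow> bform A (sum f B) y = (\<Sum>b\<in>B. bform A (f b) y)"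
  by (simp flip: dot_mat_vec add: dot_sum)

lemma bform_sum_right:
  "finite B \<Longrightarrow> (\<And>b. b \<in> B \<Longrightarrow> finsupp (f b)) \<Longrightarrow> bform A x (sum f B) = (\<Sum>b\<in>B. bform A x (f b))"
  by (simp flip: dot_mat_vec add: mat_vec_sum dot_sum_left)

lemma bform_lincomb: "bform (\<lambda>i j. \<Sum>k<p. mu k * M k i j) x y = (\<Sum>k<p. mu k * bform (M k) x y)"
  by (simp flip: dot_mat_vec add: mat_vec_lincomb dot_sum_left dot_scale_left)

lemma bform_orth_pair:
  assumes "\<And>i j. A i j = A j i" "finsupp x" "finsupp y" "bform A x y = 0"
  shows "bform A (fscale a x + fscale b y) (fscale a x + fscale b y) = a * a * bform A x x + b * b * bform A y y"
proof -
  have "bform A y x = 0"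
    using assms bform_sym[of A y x] by simp
  then show ?thesis
    using assms by (simp add: bform_add_left bform_add_right bform_scale_left bform_scale_right algebra_simps)
qed

lemma bform_perturb:
  assumes "finsupp x" "finsupp y" "finsupp v" "finsupp w"
  shows "bform A (x + fscale e v) (y + fscale e w)
    = bform A x y + e * (bform A x w + bform A v y) + e * e * bform A v w"
  using assms by (simp add: bform_add_left bform_add_right bform_scale_left bform_scale_right algebra_simps)

section \<open>Subspaces of finite codimension\<close>

lemma span_if_kernels_subset:
  assumes "finite Fs"
    and "\<And>x. finsupp x \<Longrightarrow> (\<forall>f\<in>Fs. dot f x = 0) \<Longrightarrow> dot a x = 0"
  shows "a \<in> seq.span Fs"
  using assms
proof (induction Fs arbitrary: a rule: finite_induct)
  case empty
  have "a = 0"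
  proof
    fix j
    show "a j = 0 j"
      using empty[of "unit_vec j"] by simp
  qed
  then show ?case
    by (metis seq.span_zero)
next
  case (insert f Fs)
  show ?case
  proof (cases "\<exists>z. finsupp z \<and> (\<forall>g\<in>Fs. dot g z = 0) \<and> dot f z \<noteq> 0")
    case True
    then obtain z where z: "finsupp z" "\<forall>g\<in>Fs. dot g z = 0" "dot f z \<noteq> 0"
      by blast
    define c where "c = dot a z / dot f z"
    have "a - fscale c f \<in> seq.span Fs"
    proof (rule insert.IH)
      fix x assume x: "finsupp x" "\<forall>g\<in>Fs. dot g x = 0"
      define x' where "x' = x - fscale (dot f x / dot f z) z"
      have "finsupp x'" "\<forall>g\<in>insert f Fs. dot g x' = 0"
        unfolding x'_def using x z by (auto simp: dot_diff dot_scale)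
      then have "dot a x' = 0"
        using insert.prems by blast
      then have "dot a x = (dot f x / dot f z) * dot a z"
        unfolding x'_def using x z by (simp add: dot_diff dot_scale)
      then show "dot (a - fscale c f) x = 0"
        using z by (simp add: dot_diff_left dot_scale_left c_def field_simps)
    qed
    then have "a - fscale c f \<in> seq.span (insert f Fs)"
      by (meson seq.span_mono subset_insertI subsetD)
    moreover have "fscale c f \<in> seq.span (insert f Fs)"
      by (simp add: seq.span_base seq.span_scale)
    ultimately have "a - fscale c f + fscale c f \<in> seq.span (insert f Fs)"
      by (rule seq.span_add)
    then show ?thesis
      by simp
  next
    case False
    have "a \<in> seq.span Fs"
    proof (rule insert.IH)
      fix x assume "finsupp x" "\<forall>g\<in>Fs. dot g x = 0"
      then show "dot a x = 0"
        using insert.prems False by auto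
    qed
    then show ?thesis
      by (meson seq.span_mono subset_insertI subsetD)
  qed
qed

definition fin_subspace :: "(nat \<Rightarrow> complex) set \<Rightarrow> bool" where
  "fin_subspace H \<longleftrightarrow> seq.subspace H \<and> (\<forall>x\<in>H. finsupp x)"

lemma fin_subspace_kernel: "fin_subspace H \<Longrightarrow> fin_subspace {x\<in>H. dot f x = 0}"
  by (auto simp: fin_subspace_def seq.subspace_def dot_add dot_scale)

lemma fin_subspace_diff_lincomb:
  assumes "fin_subspace H" "x \<in> H" "Z \<subseteq> H"
  shows "x - (\<Sum>z\<in>Z. fscale (\<alpha> z) z) \<in> H"
proof -
  have sub: "seq.subspace H"
    using assms(1) by (simp add: fin_subspace_def)
  have "(\<Sum>z\<in>Z. fscale (\<alpha> z) z) \<in> H"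
    by (rule seq.subspace_sum[OF sub]) (use assms(3) seq.subspace_scale[OF sub] in blast)
  then show ?thesis
    using assms(2) by (rule seq.subspace_diff[OF sub, rotated])
qed

lemma diff_sum_insert_fscale:
  assumes "finite Z" "z0 \<notin> Z"
  shows "x - (\<Sum>z\<in>insert z0 Z. fscale ((\<alpha>(z0 := \<beta>)) z) z) = x - fscale \<beta> z0 - (\<Sum>z\<in>Z. fscale (\<alpha> z) z)"
proof -
  have "(\<Sum>z\<in>Z. fscale ((\<alpha>(z0 := \<beta>)) z) z) = (\<Sum>z\<in>Z. fscale (\<alpha> z) z)"
    using assms(2) by (intro sum.cong) auto
  then show ?thesis
    using assms by (simp add: algebra_simps)
qed

text \<open>A subspace cut out of \<open>H\<close> by \<open>card Fs\<close> linear functionals has codimension at most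
  \<open>card Fs\<close> in \<open>H\<close>.\<close>

lemma fin_subspace_split:
  assumes "finite Fs" "fin_subspace H"
  shows "\<exists>Z\<subseteq>H. finite Z \<and> card Z \<le> card Fs \<and>
           (\<forall>x\<in>H. \<exists>\<alpha>. \<forall>f\<in>Fs. dot f (x - (\<Sum>z\<in>Z. fscale (\<alpha> z) z)) = 0)"
  using assms
proof (induction Fs arbitrary: H rule: finite_induct)
  case empty
  show ?case
    by (intro exI[of _ "{}"]) simp
next
  case (insert f Fs)
  define H1 where "H1 = {x\<in>H. dot f x = 0}"
  have H1: "fin_subspace H1"
    unfolding H1_def by (rule fin_subspace_kernel[OF insert.prems])
  then obtain Z1 where Z1: "Z1 \<subseteq> H1" "finite Z1" "card Z1 \<le> card Fs"
      "\<forall>x\<in>H1. \<exists>\<alpha>. \<forall>g\<in>Fs. dot g (x - (\<Sum>z\<in>Z1. fscale (\<alpha> z) z)) = 0"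
    using insert.IH[OF H1] by blast
  have step: "\<exists>\<alpha>. \<forall>g\<in>insert f Fs. dot g (x - (\<Sum>z\<in>Z1. fscale (\<alpha> z) z)) = 0" if x: "x \<in> H1" for x
  proof -
    obtain \<alpha> where \<alpha>: "\<forall>g\<in>Fs. dot g (x - (\<Sum>z\<in>Z1. fscale (\<alpha> z) z)) = 0"
      using bspec[OF Z1(4) x] by blast
    have "x - (\<Sum>z\<in>Z1. fscale (\<alpha> z) z) \<in> H1"
      using fin_subspace_diff_lincomb[OF H1 x Z1(1)] .
    then have "dot f (x - (\<Sum>z\<in>Z1. fscale (\<alpha> z) z)) = 0"
      by (simp add: H1_def)
    then show ?thesis
      using \<alpha> by (intro exI[of _ \<alpha>]) simp
  qed
  show ?case
  proof (cases "\<exists>z0\<in>H. dot f z0 \<noteq> 0")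
    case True
    then obtain z0 where z0: "z0 \<in> H" "dot f z0 \<noteq> 0"
      by blast
    have z0_notin: "z0 \<notin> Z1"
      using Z1(1) z0 by (auto simp: H1_def)
    have "\<forall>x\<in>H. \<exists>\<alpha>. \<forall>g\<in>insert f Fs. dot g (x - (\<Sum>z\<in>insert z0 Z1. fscale (\<alpha> z) z)) = 0"
    proof
      fix x assume x: "x \<in> H"
      define \<beta> where "\<beta> = dot f x / dot f z0"
      have fin: "finsupp x" "finsupp z0"
        using x z0 insert.prems by (auto simp: fin_subspace_def)
      have "x - fscale \<beta> z0 \<in> H"
        using x z0(1) insert.prems by (simp add: fin_subspace_def seq.subspace_diff seq.subspace_scale)
      moreover have "dot f (x - fscale \<beta> z0) = 0"
        using fin z0(2) by (simp add: \<beta>_def dot_diff dot_scale)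
      ultimately have "x - fscale \<beta> z0 \<in> H1"
        by (simp add: H1_def)
      then obtain \<alpha> where \<alpha>: "\<forall>g\<in>insert f Fs. dot g (x - fscale \<beta> z0 - (\<Sum>z\<in>Z1. fscale (\<alpha> z) z)) = 0"
        using step by blast
      show "\<exists>\<alpha>. \<forall>g\<in>insert f Fs. dot g (x - (\<Sum>z\<in>insert z0 Z1. fscale (\<alpha> z) z)) = 0"
      proof (intro exI[of _ "\<alpha>(z0 := \<beta>)"])
        show "\<forall>g\<in>insert f Fs. dot g (x - (\<Sum>z\<in>insert z0 Z1. fscale ((\<alpha>(z0 := \<beta>)) z) z)) = 0"
          unfolding diff_sum_insert_fscale[OF Z1(2) z0_notin] by (rule \<alpha>)
      qed
    qed
    moreover have "insert z0 Z1 \<subseteq> H"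
      using Z1(1) z0 by (auto simp: H1_def)
    moreover have "finite (insert z0 Z1)" "card (insert z0 Z1) \<le> card (insert f Fs)"
      using Z1(2,3) z0_notin insert.hyps by simp_all
    ultimately show ?thesis
      by (intro exI[of _ "insert z0 Z1"] conjI)
  next
    case False
    then have "H1 = H"
      by (auto simp: H1_def)
    then have "Z1 \<subseteq> H" "\<forall>x\<in>H. \<exists>\<alpha>. \<forall>g\<in>insert f Fs. dot g (x - (\<Sum>z\<in>Z1. fscale (\<alpha> z) z)) = 0"
      using Z1(1) step by simp_all
    moreover have "card Z1 \<le> card (insert f Fs)"
      using Z1(3) insert.hyps by simp
    ultimately show ?thesis
      using Z1(2) by (intro exI[of _ Z1] conjI)
  qed
qed

lemma polarization:
  assumes "fin_subspace H" "\<And>i j. A i j = A j i" "\<And>x. x \<in> H \<Longrightarrow> bform A x x = 0"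
    and "x \<in> H" "y \<in> H"
  shows "bform A x y = 0"
proof -
  have fin: "finsupp x" "finsupp y" "x + y \<in> H"
    using assms by (auto simp: fin_subspace_def seq.subspace_add)
  then have "bform A (x + y) (x + y) = 0"
    using assms by auto
  then have "bform A x x + bform A x y + bform A y x + bform A y y = 0"
    using fin by (simp add: bform_add_left bform_add_right algebra_simps)
  then show ?thesis
    using assms bform_sym[of A x y] by simp
qed

lemma subspace_mat_image: "seq.subspace (mat_image A)"
  unfolding seq.subspace_def mat_image_eq
proof (intro conjI ballI allI)
  show "0 \<in> {mat_vec A x |x. finsupp x}"
    by (intro CollectI exI[of _ 0]) (simp add: mat_vec_def dot_def supp_def fun_eq_iff)
next
  fix a b assume "a \<in> {mat_vec A x |x. finsupp x}" "b \<in> {mat_vec A x |x. finsupp x}"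
  then obtain x y where "a = mat_vec A x" "b = mat_vec A y" "finsupp x" "finsupp y"
    by auto
  then show "a + b \<in> {mat_vec A x |x. finsupp x}"
    by (auto intro!: exI[of _ "x + y"] simp: mat_vec_add)
next
  fix c a assume "a \<in> {mat_vec A x |x. finsupp x}"
  then obtain x where "a = mat_vec A x" "finsupp x"
    by auto
  then show "fscale c a \<in> {mat_vec A x |x. finsupp x}"
    by (auto intro!: exI[of _ "fscale c x"] simp: mat_vec_scale)
qed

lemma mat_rank_le_card:
  assumes "finite S" "mat_image A \<subseteq> seq.span S"
  shows "mat_rank A \<le> enat (card S)"
proof -
  obtain B where B: "B \<subseteq> mat_image A" "seq.independent B" "mat_image A \<subseteq> seq.span B"
    by (rule seq.maximal_independent_subset)
  have "finite B" "card B \<le> card S"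
    using seq.independent_span_bound[OF assms(1) B(2)] B(1) assms(2) by auto
  moreover have "seq.span B = mat_image A"
    using seq.span_subspace[OF B(1) B(3) subspace_mat_image] .
  moreover have "card B = seq.dim (mat_image A)"
    using seq.basis_card_eq_dim[OF B(1) B(3) B(2)] .
  ultimately show ?thesis
    unfolding mat_rank_def using B by auto
qed

section \<open>Gram factorization of complex symmetric matrices\<close>

definition gram_factorizable :: "nat \<Rightarrow> (nat \<Rightarrow> nat \<Rightarrow> complex) \<Rightarrow> bool" where
  "gram_factorizable n X \<longleftrightarrow> (\<exists>c. \<forall>i<n. \<forall>j<n. X i j = (\<Sum>s<n. c s i * c s j))"

lemma csqrt_mult_self: "csqrt z * csqrt z = z"
  by (metis power2_csqrt power2_eq_square)

text \<open>Splitting off the pivot \<open>X n n\<close>: \<open>X\<close> is the Schur complement plus \<open>w w\<^sup>T\<close> with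
  \<open>w i = X i n / \<surd>(X n n)\<close>.\<close>

lemma gram_factorizable_pivot:
  assumes sym: "\<And>i j. X i j = X j i" and nz: "X n n \<noteq> 0"
    and schur: "gram_factorizable n (\<lambda>i j. X i j - X i n * X j n / X n n)"
  shows "gram_factorizable (Suc n) X"
proof -
  obtain c' where c': "\<And>i j. i < n \<Longrightarrow> j < n \<Longrightarrow> X i j - X i n * X j n / X n n = (\<Sum>s<n. c' s i * c' s j)"
    using schur unfolding gram_factorizable_def by blast
  define w where "w i = X i n / csqrt (X n n)" for i
  have ww: "w i * w j = X i n * X j n / X n n" for i j
    by (simp add: w_def csqrt_mult_self)
  define c where "c s i = (if s = n then w i else if i = n then 0 else c' s i)" for s i
  have "X i j = (\<Sum>s<Suc n. c s i * c s j)" if "i < Suc n" "j < Suc n" for i j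
  proof -
    have split: "(\<Sum>s<Suc n. c s i * c s j) = (\<Sum>s<n. c s i * c s j) + w i * w j"
      by (simp add: c_def)
    show ?thesis
    proof (cases "i = n \<or> j = n")
      case True
      then have "(\<Sum>s<n. c s i * c s j) = 0"
        by (auto simp: c_def intro!: sum.neutral)
      then show ?thesis
        using True split ww nz sym[of n j] by auto
    next
      case False
      then have "(\<Sum>s<n. c s i * c s j) = X i j - w i * w j"
        using c' that by (simp add: c_def ww)
      then show ?thesis
        using split by simp
    qed
  qed
  then show ?thesis
    unfolding gram_factorizable_def by blast
qed

lemma gram_factorizable_congruence:
  assumes "gram_factorizable n Y"
    and "\<And>i j. i < n \<Longrightarrow> j < n \<Longrightarrow> X i j = (\<Sum>a<n. \<Sum>b<n. T i a * Y a b * T j b)"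
  shows "gram_factorizable n X"
proof -
  obtain d where d: "\<And>a b. a < n \<Longrightarrow> b < n \<Longrightarrow> Y a b = (\<Sum>s<n. d s a * d s b)"
    using assms(1) unfolding gram_factorizable_def by blast
  define c where "c s i = (\<Sum>a<n. T i a * d s a)" for s i
  have "X i j = (\<Sum>s<n. c s i * c s j)" if "i < n" "j < n" for i j
  proof -
    have "(\<Sum>s<n. c s i * c s j) = (\<Sum>s<n. \<Sum>a<n. \<Sum>b<n. T i a * d s a * (T j b * d s b))"
      by (simp add: c_def sum_product)
    also have "\<dots> = (\<Sum>a<n. \<Sum>s<n. \<Sum>b<n. T i a * d s a * (T j b * d s b))"
      by (rule sum.swap)
    also have "\<dots> = (\<Sum>a<n. \<Sum>b<n. \<Sum>s<n. T i a * d s a * (T j b * d s b))"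
      by (rule sum.cong[OF refl]) (rule sum.swap)
    also have "\<dots> = (\<Sum>a<n. \<Sum>b<n. T i a * Y a b * T j b)"
      by (intro sum.cong refl) (simp add: d sum_distrib_left sum_distrib_right mult_ac)
    finally show ?thesis
      using assms(2) that by simp
  qed
  then show ?thesis
    unfolding gram_factorizable_def by blast
qed

lemma gram_factorizable_zero_row:
  assumes "gram_factorizable n X" "\<And>j. j < Suc n \<Longrightarrow> X n j = 0" "\<And>i j. X i j = X j i"
  shows "gram_factorizable (Suc n) X"
proof -
  obtain c' where c': "\<And>i j. i < n \<Longrightarrow> j < n \<Longrightarrow> X i j = (\<Sum>s<n. c' s i * c' s j)"
    using assms(1) unfolding gram_factorizable_def by blast
  define c where "c s i = (if s = n \<or> i = n then 0 else c' s i)" for s i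
  have "X i j = (\<Sum>s<Suc n. c s i * c s j)" if "i < Suc n" "j < Suc n" for i j
  proof (cases "i = n \<or> j = n")
    case True
    then show ?thesis
      using assms(2,3) that by (auto simp: c_def intro!: sum.neutral[symmetric])
  next
    case False
    then show ?thesis
      using c' that by (simp add: c_def)
  qed
  then show ?thesis
    unfolding gram_factorizable_def by blast
qed

definition shear :: "nat \<Rightarrow> nat \<Rightarrow> complex \<Rightarrow> nat \<Rightarrow> nat \<Rightarrow> complex" where
  "shear n m t i a = (if a = i then 1 else 0) - (if i = n then t else 0) * (if a = m then 1 else 0)"

lemma sum_shear:
  assumes "i < N" "m < N"
  shows "(\<Sum>a<N. shear n m t i a * F a) = F i - (if i = n then t * F m else 0)"
  using assms by (simp add: shear_def left_diff_distrib sum_subtractf mult.assoc sum_delta_mult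
      flip: sum_distrib_left)

lemma sum_sum_shear:
  assumes "i < N" "j < N" "m < N"
  shows "(\<Sum>a<N. \<Sum>b<N. shear n m t i a * F a b * shear n m t j b)
    = F i j - (if j = n then t * F i m else 0) - (if i = n then t * (F m j - (if j = n then t * F m m else 0)) else 0)"
proof -
  have "(\<Sum>a<N. \<Sum>b<N. shear n m t i a * F a b * shear n m t j b)
      = (\<Sum>a<N. shear n m t i a * (\<Sum>b<N. shear n m t j b * F a b))"
    by (simp add: sum_distrib_left mult_ac)
  also have "\<dots> = (\<Sum>a<N. shear n m t i a * (F a j - (if j = n then t * F a m else 0)))"
    using sum_shear[OF assms(2,3)] by simp
  also have "\<dots> = F i j - (if j = n then t * F i m else 0) - (if i = n then t * (F m j - (if j = n then t * F m m else 0)) else 0)"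
    using sum_shear[OF assms(1,3)] by simp
  finally show ?thesis .
qed

lemma gram_factorizable_sym: "(\<And>i j. X i j = X j i) \<Longrightarrow> gram_factorizable n X"
proof (induction n arbitrary: X)
  case 0
  then show ?case
    by (simp add: gram_factorizable_def)
next
  case (Suc n)
  consider "X n n \<noteq> 0" | "X n n = 0" "\<exists>m<n. X n m \<noteq> 0" | "\<And>j. j < Suc n \<Longrightarrow> X n j = 0"
    using less_Suc_eq by blast
  then show ?case
  proof cases
    case 1
    then show ?thesis
      using Suc by (intro gram_factorizable_pivot) auto
  next
    case 2
    then obtain m where m: "m < n" "X n m \<noteq> 0"
      by blast
    obtain t :: complex where t: "2 * t * X n m + t * t * X m m \<noteq> 0"
      using m(2) by (cases "2 * X n m + X m m = 0") (auto intro: that[of 1] that[of "-1"])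
    define Y where "Y i j = (\<Sum>a<Suc n. \<Sum>b<Suc n. shear n m (- t) i a * X a b * shear n m (- t) j b)"
      for i j
    \<comment> \<open>\<open>Y\<close> is \<open>X\<close> conjugated by \<open>I + t E\<^sub>n\<^sub>m\<close>, and its pivot \<open>Y n n\<close> is nonzero\<close>
    have Y_sym: "Y i j = Y j i" for i j
      unfolding Y_def using Suc.prems by (subst sum.swap) (simp add: mult_ac)
    have Y_eq: "Y i j = X i j + (if j = n then t * X i m else 0) + (if i = n then t * (X m j
        + (if j = n then t * X m m else 0)) else 0)" if "i < Suc n" "j < Suc n" for i j
      unfolding Y_def using that m(1) by (subst sum_sum_shear) auto
    have "Y n n \<noteq> 0"
      using t 2 Suc.prems[of m n] m(1) by (simp add: Y_eq algebra_simps)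
    then have "gram_factorizable (Suc n) Y"
      using Y_sym Suc.IH by (intro gram_factorizable_pivot) auto
    moreover have "X i j = (\<Sum>a<Suc n. \<Sum>b<Suc n. shear n m t i a * Y a b * shear n m t j b)"
      if "i < Suc n" "j < Suc n" for i j
      using that m(1) by (subst sum_sum_shear) (auto simp: Y_eq algebra_simps)
    ultimately show ?thesis
      by (rule gram_factorizable_congruence)
  next
    case 3
    then show ?thesis
      using Suc by (intro gram_factorizable_zero_row) auto
  qed
qed

section \<open>Simultaneous realization of Gram matrices\<close>

lemma four_mult_le_two_power: "4 \<le> p \<Longrightarrow> 4 * p \<le> (2::nat) ^ p"
  by (induction p rule: nat_induct_at_least) simp_all

lemma family_size_bound:
  assumes "0 < p" "0 < l"
  shows "(2 * p - 1) * (p * l + p - 2) < p * 2 ^ p * l"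
proof (cases "p \<ge> 4")
  case True
  have "p \<le> p * l" "1 \<le> p * l"
    using assms by simp_all
  then have "p * l + p - 2 < 2 * (p * l)"
    by linarith
  then have "(2 * p - 1) * (p * l + p - 2) < 2 * p * (2 * (p * l))"
    using assms by (intro mult_le_less_imp_less) auto
  also have "\<dots> = (4 * p) * (p * l)"
    by simp
  also have "\<dots> \<le> 2 ^ p * (p * l)"
    using four_mult_le_two_power[OF True] by (rule mult_le_mono1)
  finally show ?thesis
    by (simp add: mult_ac)
next
  case False
  then have "p = 1 \<or> p = 2 \<or> p = 3"
    using assms(1) by auto
  then show ?thesis
    using assms(2) by (elim disjE) simp_all
qed

lemma div_eq_image:
  assumes "k < p" "0 < (l::nat)"
  shows "{j. j < p * l \<and> j div l = k} = (\<lambda>s. k * l + s) ` {..<l}"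
proof (intro set_eqI iffI)
  fix j assume "j \<in> {j. j < p * l \<and> j div l = k}"
  then have "j = k * l + j mod l" "j mod l < l"
    using assms(2) by (auto simp: div_mult_mod_eq[symmetric])
  then show "j \<in> (\<lambda>s. k * l + s) ` {..<l}"
    by blast
next
  fix j assume "j \<in> (\<lambda>s. k * l + s) ` {..<l}"
  then obtain s where s: "s < l" "j = k * l + s"
    by auto
  have "k * l + s < Suc k * l"
    using s by simp
  also have "\<dots> \<le> p * l"
    using assms(1) by (intro mult_le_mono1) simp
  finally show "j \<in> {j. j < p * l \<and> j div l = k}"
    using s by simp
qed

locale sym_tuple =
  fixes p :: nat and M :: "nat \<Rightarrow> nat \<Rightarrow> nat \<Rightarrow> complex"
  assumes sym: "\<And>k i j. k < p \<Longrightarrow> M k i j = M k j i"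
begin

definition comb :: "(nat \<Rightarrow> complex) \<Rightarrow> nat \<Rightarrow> nat \<Rightarrow> complex" where
  "comb mu = (\<lambda>i j. \<Sum>k<p. mu k * M k i j)"

definition comb_rank_gt :: "nat \<Rightarrow> bool" where
  "comb_rank_gt r \<longleftrightarrow> (\<forall>mu. (\<exists>k<p. mu k \<noteq> 0) \<longrightarrow> enat r < mat_rank (comb mu))"

definition orth_compl :: "(nat \<Rightarrow> complex) set \<Rightarrow> (nat \<Rightarrow> complex) set" where
  "orth_compl S = {x. finsupp x \<and> (\<forall>u\<in>S. \<forall>k<p. bform (M k) u x = 0)}"

definition orth_functionals :: "(nat \<Rightarrow> complex) set \<Rightarrow> (nat \<Rightarrow> complex) set" where
  "orth_functionals S = (\<lambda>(u, k). mat_vec (M k) u) ` (S \<times> {..<p})"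

definition orth_family :: "(nat \<Rightarrow> complex) set \<Rightarrow> bool" where
  "orth_family S \<longleftrightarrow> finite S \<and> (\<forall>u\<in>S. finsupp u \<and> (\<exists>k<p. bform (M k) u u \<noteq> 0))
     \<and> (\<forall>u\<in>S. \<forall>v\<in>S. u \<noteq> v \<longrightarrow> (\<forall>k<p. bform (M k) u v = 0))"

lemma comb_sym: "comb mu i j = comb mu j i"
  unfolding comb_def using sym by (intro sum.cong) auto

lemma bform_comb: "bform (comb mu) x y = (\<Sum>k<p. mu k * bform (M k) x y)"
  unfolding comb_def by (rule bform_lincomb)

lemma bform_M_sym: "k < p \<Longrightarrow> bform (M k) x y = bform (M k) y x"
  by (rule bform_sym) (use sym in auto)

lemma comb_rank_gt_mono: "comb_rank_gt r \<Longrightarrow> r' \<le> r \<Longrightarrow> comb_rank_gt r'"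
  unfolding comb_rank_gt_def by (meson enat_ord_simps(1) le_less_trans)

lemma fin_subspace_orth_compl: "fin_subspace (orth_compl S)"
  by (auto simp: fin_subspace_def seq.subspace_def orth_compl_def bform_add_right bform_scale_right)

lemma orth_compl_antimono: "S \<subseteq> T \<Longrightarrow> orth_compl T \<subseteq> orth_compl S"
  by (auto simp: orth_compl_def)

lemma orth_compl_eq_kernels:
  "orth_compl S = {x. finsupp x \<and> (\<forall>f\<in>orth_functionals S. dot f x = 0)}"
proof -
  have "(\<forall>f\<in>orth_functionals S. dot f x = 0) \<longleftrightarrow> (\<forall>u\<in>S. \<forall>k<p. bform (M k) u x = 0)" for x
    using bform_M_sym[of _ x] by (auto simp: orth_functionals_def dot_mat_vec)
  then show ?thesis
    by (auto simp: orth_compl_def)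
qed

lemma finite_orth_functionals: "finite S \<Longrightarrow> finite (orth_functionals S)"
  by (simp add: orth_functionals_def)

lemma card_orth_functionals: "finite S \<Longrightarrow> card (orth_functionals S) \<le> p * card S"
  unfolding orth_functionals_def
  by (rule order.trans[OF card_image_le]) (simp_all add: card_cartesian_product)

lemma mat_vec_comb_in_span:
  assumes "u \<in> S"
  shows "mat_vec (comb mu) u \<in> seq.span (orth_functionals S)"
proof -
  have "mat_vec (comb mu) u = (\<Sum>k<p. fscale (mu k) (mat_vec (M k) u))"
    unfolding comb_def by (rule mat_vec_lincomb)
  also have "\<dots> \<in> seq.span (orth_functionals S)"
    using assms by (intro seq.span_sum seq.span_scale seq.span_base) (auto simp: orth_functionals_def)
  finally show ?thesis .
qed

lemma mat_vec_isotropic_in_span: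
  assumes "finite S" "\<And>x. x \<in> orth_compl S \<Longrightarrow> bform (comb mu) x x = 0" "h \<in> orth_compl S"
  shows "mat_vec (comb mu) h \<in> seq.span (orth_functionals S)"
proof (rule span_if_kernels_subset)
  show "finite (orth_functionals S)"
    using assms(1) by (rule finite_orth_functionals)
  fix w assume "finsupp w" "\<forall>f\<in>orth_functionals S. dot f w = 0"
  then have "w \<in> orth_compl S"
    by (simp add: orth_compl_eq_kernels)
  then show "dot (mat_vec (comb mu) h) w = 0"
    using polarization[OF fin_subspace_orth_compl _ assms(2) _ assms(3)] comb_sym
    by (simp add: dot_mat_vec)
qed

lemma orth_family_projection:
  assumes S: "orth_family S" and kk: "\<And>u. u \<in> S \<Longrightarrow> kk u < p \<and> bform (M (kk u)) u u \<noteq> 0"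
    and "u \<in> S" "finsupp x"
  shows "bform (M (kk u)) u
           (x - (\<Sum>v\<in>S. fscale (bform (M (kk v)) v x / bform (M (kk v)) v v) v)) = 0"
proof -
  have fin: "finite S" "\<And>v. v \<in> S \<Longrightarrow> finsupp v"
    using S by (auto simp: orth_family_def)
  have "bform (M (kk u)) u (\<Sum>v\<in>S. fscale (bform (M (kk v)) v x / bform (M (kk v)) v v) v)
      = (\<Sum>v\<in>S. bform (M (kk v)) v x / bform (M (kk v)) v v * bform (M (kk u)) u v)"
    using fin by (simp add: bform_sum_right bform_scale_right)
  also have "\<dots> = (\<Sum>v\<in>S. if v = u then bform (M (kk u)) u x else 0)"
    using S kk \<open>u \<in> S\<close> by (intro sum.cong refl) (auto simp: orth_family_def)
  also have "\<dots> = bform (M (kk u)) u x"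
    using fin(1) \<open>u \<in> S\<close> by simp
  moreover have "finsupp (\<Sum>v\<in>S. fscale (bform (M (kk v)) v x / bform (M (kk v)) v v) v)"
    using fin by (intro finsupp_sum) auto
  ultimately show ?thesis
    using \<open>finsupp x\<close> by (simp add: bform_diff_right)
qed

definition other_functionals :: "((nat \<Rightarrow> complex) \<Rightarrow> nat) \<Rightarrow> (nat \<Rightarrow> complex) set \<Rightarrow> (nat \<Rightarrow> complex) set"
  where "other_functionals kk S = (\<lambda>(u, k). mat_vec (M k) u) ` (SIGMA u:S. {..<p} - {kk u})"

lemma card_other_functionals:
  assumes "finite S" "\<And>u. u \<in> S \<Longrightarrow> kk u < p"
  shows "card (other_functionals kk S) \<le> (p - 1) * card S"
proof -
  have "card (other_functionals kk S) \<le> card (SIGMA u:S. {..<p} - {kk u})"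
    unfolding other_functionals_def by (rule card_image_le) (use assms in auto)
  also have "\<dots> = (\<Sum>u\<in>S. p - 1)"
    using assms by (simp add: card_SigmaI)
  finally show ?thesis
    by (simp add: mult.commute)
qed

lemma orth_compl_if_other_functionals:
  assumes "finsupp h" "\<And>u. u \<in> S \<Longrightarrow> bform (M (kk u)) u h = 0"
    and "\<forall>f\<in>other_functionals kk S. dot f h = 0"
  shows "h \<in> orth_compl S"
proof -
  have "bform (M k) u h = 0" if "u \<in> S" "k < p" for u k
  proof (cases "k = kk u")
    case True
    then show ?thesis
      using assms(2) \<open>u \<in> S\<close> by simp
  next
    case False
    then have "mat_vec (M k) u \<in> other_functionals kk S"
      unfolding other_functionals_def using that by (intro image_eqI[of _ _ "(u, k)"]) auto
    then have "dot (mat_vec (M k) u) h = 0"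
      using assms(3) by blast
    then show ?thesis
      using bform_M_sym[OF \<open>k < p\<close>, of h u] by (simp add: dot_mat_vec)
  qed
  then show ?thesis
    using assms(1) by (simp add: orth_compl_def)
qed

text \<open>Projecting orthogonally onto the family along one anisotropic form \<open>M (kk u)\<close> per vector
  costs \<open>card S\<close> dimensions; killing the remaining \<open>p - 1\<close> functionals per vector costs at
  most \<open>(p - 1) * card S\<close> more.\<close>

lemma orth_family_decomposition:
  assumes S: "orth_family S"
  obtains Z where "finite Z" "card Z \<le> (p - 1) * card S" "\<And>z. z \<in> Z \<Longrightarrow> finsupp z"
    "\<And>x. finsupp x \<Longrightarrow> \<exists>\<beta> \<alpha>. x - (\<Sum>u\<in>S. fscale (\<beta> u) u) - (\<Sum>z\<in>Z. fscale (\<alpha> z) z) \<in> orth_compl S"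
proof -
  have fin: "finite S" "\<And>u. u \<in> S \<Longrightarrow> finsupp u"
    using S by (auto simp: orth_family_def)
  have "\<forall>u\<in>S. \<exists>k. k < p \<and> bform (M k) u u \<noteq> 0"
    using S unfolding orth_family_def by blast
  then obtain kk where kk: "\<And>u. u \<in> S \<Longrightarrow> kk u < p \<and> bform (M (kk u)) u u \<noteq> 0"
    by (metis (no_types) bchoice)
  define H where "H = {y. finsupp y \<and> (\<forall>u\<in>S. bform (M (kk u)) u y = 0)}"
  have H: "fin_subspace H"
    by (auto simp: H_def fin_subspace_def seq.subspace_def bform_add_right bform_scale_right)
  have fin_F: "finite (other_functionals kk S)"
    unfolding other_functionals_def using fin(1) by simp
  obtain Z where Z: "Z \<subseteq> H" "finite Z" "card Z \<le> card (other_functionals kk S)"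
      "\<forall>y\<in>H. \<exists>\<alpha>. \<forall>f\<in>other_functionals kk S. dot f (y - (\<Sum>z\<in>Z. fscale (\<alpha> z) z)) = 0"
    using fin_subspace_split[OF fin_F H] by blast
  have "card (other_functionals kk S) \<le> (p - 1) * card S"
    using kk by (intro card_other_functionals[OF fin(1)]) blast
  then have "card Z \<le> (p - 1) * card S"
    using Z(3) by linarith
  moreover have "\<And>z. z \<in> Z \<Longrightarrow> finsupp z"
    using Z(1) by (auto simp: H_def)
  moreover have "\<exists>\<beta> \<alpha>. x - (\<Sum>u\<in>S. fscale (\<beta> u) u) - (\<Sum>z\<in>Z. fscale (\<alpha> z) z) \<in> orth_compl S"
    if x: "finsupp x" for x
  proof -
    define \<beta> where "\<beta> u = bform (M (kk u)) u x / bform (M (kk u)) u u" for u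
    define y where "y = x - (\<Sum>u\<in>S. fscale (\<beta> u) u)"
    have "finsupp y"
      unfolding y_def using fin x by (intro finsupp_diff finsupp_sum) auto
    moreover have "\<forall>u\<in>S. bform (M (kk u)) u y = 0"
      unfolding y_def \<beta>_def using orth_family_projection[OF S kk _ x] by blast
    ultimately have "y \<in> H"
      by (simp add: H_def)
    then obtain \<alpha> where \<alpha>: "\<forall>f\<in>other_functionals kk S. dot f (y - (\<Sum>z\<in>Z. fscale (\<alpha> z) z)) = 0"
      using Z(4) by blast
    have "y - (\<Sum>z\<in>Z. fscale (\<alpha> z) z) \<in> H"
      using fin_subspace_diff_lincomb[OF H \<open>y \<in> H\<close> Z(1)] .
    then have "y - (\<Sum>z\<in>Z. fscale (\<alpha> z) z) \<in> orth_compl S"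
      using \<alpha> by (intro orth_compl_if_other_functionals) (simp_all add: H_def)
    then show ?thesis
      unfolding y_def by blast
  qed
  ultimately show ?thesis
    by (rule that[OF Z(2)])
qed

lemma mat_image_comb_subset_span:
  assumes S: "orth_family S" and iso: "\<And>x. x \<in> orth_compl S \<Longrightarrow> bform (comb mu) x x = 0"
    and Z: "finite Z" "\<And>z. z \<in> Z \<Longrightarrow> finsupp z"
    "\<And>x. finsupp x \<Longrightarrow> \<exists>\<beta> \<alpha>. x - (\<Sum>u\<in>S. fscale (\<beta> u) u) - (\<Sum>z\<in>Z. fscale (\<alpha> z) z) \<in> orth_compl S"
  shows "mat_image (comb mu) \<subseteq> seq.span (orth_functionals S \<union> mat_vec (comb mu) ` Z)"
proof -
  have fin: "finite S" "\<And>u. u \<in> S \<Longrightarrow> finsupp u"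
    using S by (auto simp: orth_family_def)
  define A where "A = comb mu"
  define F where "F = orth_functionals S \<union> mat_vec A ` Z"
  have span_mono: "seq.span (orth_functionals S) \<subseteq> seq.span F"
    unfolding F_def by (rule seq.span_mono) simp
  have "mat_vec A x \<in> seq.span F" if x: "finsupp x" for x
  proof -
    obtain \<beta> \<alpha> where h: "x - (\<Sum>u\<in>S. fscale (\<beta> u) u) - (\<Sum>z\<in>Z. fscale (\<alpha> z) z) \<in> orth_compl S"
      using Z(3)[OF x] by blast
    define s where "s = (\<Sum>u\<in>S. fscale (\<beta> u) u)"
    define y where "y = (\<Sum>z\<in>Z. fscale (\<alpha> z) z)"
    have fin_sy: "finsupp s" "finsupp y"
      unfolding s_def y_def using fin Z by (auto intro!: finsupp_sum)
    have "mat_vec A s = (\<Sum>u\<in>S. fscale (\<beta> u) (mat_vec A u))"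
      unfolding s_def using fin by (simp add: mat_vec_sum mat_vec_scale)
    also have "\<dots> \<in> seq.span F"
      using span_mono mat_vec_comb_in_span unfolding A_def by (intro seq.span_sum seq.span_scale) blast
    finally have "mat_vec A s \<in> seq.span F" .
    moreover have "mat_vec A y \<in> seq.span F"
    proof -
      have "mat_vec A y = (\<Sum>z\<in>Z. fscale (\<alpha> z) (mat_vec A z))"
        unfolding y_def using Z(1,2) by (simp add: mat_vec_sum mat_vec_scale)
      also have "\<dots> \<in> seq.span F"
        unfolding F_def by (intro seq.span_sum seq.span_scale seq.span_base) blast
      finally show ?thesis .
    qed
    moreover have "mat_vec A (x - s - y) \<in> seq.span F"
      using mat_vec_isotropic_in_span[OF fin(1) iso h] span_mono unfolding A_def s_def y_def by blast
    ultimately have "mat_vec A (x - s - y) + mat_vec A s + mat_vec A y \<in> seq.span F"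
      by (intro seq.span_add)
    then show ?thesis
      using x fin_sy by (simp add: mat_vec_add mat_vec_diff)
  qed
  then show ?thesis
    by (auto simp: mat_image_eq A_def F_def)
qed

lemma mat_rank_comb_le:
  assumes S: "orth_family S" and iso: "\<And>x. x \<in> orth_compl S \<Longrightarrow> bform (comb mu) x x = 0"
  shows "mat_rank (comb mu) \<le> enat ((2 * p - 1) * card S)"
proof -
  have fin: "finite S"
    using S by (simp add: orth_family_def)
  obtain Z where Z: "finite Z" "card Z \<le> (p - 1) * card S" "\<And>z. z \<in> Z \<Longrightarrow> finsupp z"
    "\<And>x. finsupp x \<Longrightarrow> \<exists>\<beta> \<alpha>. x - (\<Sum>u\<in>S. fscale (\<beta> u) u) - (\<Sum>z\<in>Z. fscale (\<alpha> z) z) \<in> orth_compl S"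
    using orth_family_decomposition[OF S] by blast
  define F where "F = orth_functionals S \<union> mat_vec (comb mu) ` Z"
  have "finite F"
    unfolding F_def using fin Z(1) by (simp add: finite_orth_functionals)
  moreover have "mat_image (comb mu) \<subseteq> seq.span F"
    unfolding F_def using mat_image_comb_subset_span[OF S iso Z(1,3,4)] .
  ultimately have "mat_rank (comb mu) \<le> enat (card F)"
    by (rule mat_rank_le_card)
  also have "card F \<le> card (orth_functionals S) + card (mat_vec (comb mu) ` Z)"
    unfolding F_def by (rule card_Un_le)
  also have "\<dots> \<le> p * card S + (p - 1) * card S"
    using card_orth_functionals[OF fin] card_image_le[OF Z(1), of "mat_vec (comb mu)"] Z(2) by linarith
  also have "\<dots> = (2 * p - 1) * card S"
    by (cases p) (simp_all add: algebra_simps)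
  finally show ?thesis
    by simp
qed

lemma bform_comb_eq_0: "(\<And>k. k < p \<Longrightarrow> bform (M k) x y = 0) \<Longrightarrow> bform (comb mu) x y = 0"
  by (simp add: bform_comb)

lemma exists_normalized_vector:
  assumes S: "orth_family S" and mu: "\<exists>k<p. mu k \<noteq> 0" and rk: "comb_rank_gt ((2 * p - 1) * card S)"
  shows "\<exists>u\<in>orth_compl S. bform (comb mu) u u = 1"
proof -
  have "\<not> mat_rank (comb mu) \<le> enat ((2 * p - 1) * card S)"
    using rk mu by (auto simp: comb_rank_gt_def not_le)
  then obtain x where x: "x \<in> orth_compl S" "bform (comb mu) x x \<noteq> 0"
    using mat_rank_comb_le[OF S] by blast
  define u where "u = fscale (1 / csqrt (bform (comb mu) x x)) x"
  have "finsupp x"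
    using x(1) by (simp add: orth_compl_def)
  then have "bform (comb mu) u u = 1"
    unfolding u_def using x(2)
    by (simp add: bform_scale_left bform_scale_right power2_eq_square[symmetric])
  moreover have "u \<in> orth_compl S"
    unfolding u_def using fin_subspace_orth_compl x(1) by (simp add: fin_subspace_def seq.subspace_scale)
  ultimately show ?thesis
    by blast
qed

lemma orth_family_insert:
  assumes S: "orth_family S" and u: "u \<in> orth_compl S" "\<exists>k<p. bform (M k) u u \<noteq> 0"
  shows "orth_family (insert u S)"
proof -
  have "bform (M k) u v = 0" "bform (M k) v u = 0" if "v \<in> S" "k < p" for v k
    using u(1) that bform_M_sym[of k u v] by (simp_all add: orth_compl_def)
  then show ?thesis
    using S u by (auto simp: orth_family_def orth_compl_def)
qed

lemma orth_mixture:
  fixes c d :: complex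
  assumes u1: "u1 \<in> orth_compl S" and u2: "u2 \<in> orth_compl (insert u1 S)"
  defines "u \<equiv> fscale c u1 + fscale d u2"
  shows "u \<in> orth_compl S"
    and "k < p \<Longrightarrow> bform (M k) u u = c * c * bform (M k) u1 u1 + d * d * bform (M k) u2 u2"
    and "bform (comb mu) u u = c * c * bform (comb mu) u1 u1 + d * d * bform (comb mu) u2 u2"
proof -
  have fin: "finsupp u1" "finsupp u2"
    using u1 u2 by (simp_all add: orth_compl_def)
  have orth: "bform (M k) u1 u2 = 0" if "k < p" for k
    using u2 that by (simp add: orth_compl_def)
  have "u2 \<in> orth_compl S"
    using u2 orth_compl_antimono[of S "insert u1 S"] by blast
  then show "u \<in> orth_compl S"
    using u1 fin_subspace_orth_compl[of S]
    unfolding u_def by (simp add: fin_subspace_def seq.subspace_add seq.subspace_scale)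
  show "k < p \<Longrightarrow> bform (M k) u u = c * c * bform (M k) u1 u1 + d * d * bform (M k) u2 u2"
    unfolding u_def using fin orth by (intro bform_orth_pair sym)
  show "bform (comb mu) u u = c * c * bform (comb mu) u1 u1 + d * d * bform (comb mu) u2 u2"
    unfolding u_def using fin bform_comb_eq_0[OF orth] by (intro bform_orth_pair comb_sym)
qed

text \<open>Induction on \<open>K\<close>: a vector \<open>u\<^sub>1\<close> isotropic for \<open>K\<close> is corrected, using a second
  vector \<open>u\<^sub>2\<close> orthogonal to it, to \<open>u = \<surd>b u\<^sub>1 + \<surd>(-a) u\<^sub>2\<close> where
  \<open>a = M\<^sub>k\<^sub>1(u\<^sub>1,u\<^sub>1)\<close>, \<open>b = M\<^sub>k\<^sub>1(u\<^sub>2,u\<^sub>2)\<close>; then \<open>M\<^sub>k\<^sub>1(u,u) = b a - a b = 0\<close>.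
  The coefficients \<open>[k = k\<^sub>1] - a \<mu>\<^sub>k\<close> for \<open>u\<^sub>2\<close> are chosen so that \<open>q\<^sub>\<mu>(u,u) = 1\<close>.\<close>

lemma exists_prescribed_vector:
  assumes "finite K" "orth_family S" "K \<subseteq> {..<p}" "comb_rank_gt ((2 * p - 1) * (card S + card K))"
    and "\<forall>k\<in>K. mu k = 0" "\<exists>k<p. mu k \<noteq> 0"
  shows "\<exists>u\<in>orth_compl S. (\<forall>k\<in>K. bform (M k) u u = 0) \<and> bform (comb mu) u u = 1"
  using assms
proof (induction K arbitrary: S mu rule: finite_induct)
  case empty
  then show ?case
    using exists_normalized_vector by simp
next
  case (insert k1 K)
  have k1: "k1 < p" "mu k1 = 0"
    using insert.prems by auto
  obtain u1 where u1: "u1 \<in> orth_compl S" "\<forall>k\<in>K. bform (M k) u1 u1 = 0" "bform (comb mu) u1 u1 = 1"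
    using insert.IH[of S mu] insert.prems insert.hyps comb_rank_gt_mono by force
  define a where "a = bform (M k1) u1 u1"
  show ?case
  proof (cases "a = 0")
    case True
    then show ?thesis
      using u1 by (auto simp: a_def)
  next
    case False
    define mu' where "mu' k = (if k = k1 then 1 else 0) - a * mu k" for k
    have S': "orth_family (insert u1 S)"
      using orth_family_insert[OF insert.prems(1) u1(1)] False k1 by (auto simp: a_def)
    have "card (insert u1 S) + card K \<le> card S + card (insert k1 K)"
      using insert.hyps by (simp add: card_insert_le_m1 card_insert_if)
    then have "comb_rank_gt ((2 * p - 1) * (card (insert u1 S) + card K))"
      using insert.prems(3) comb_rank_gt_mono by simp
    moreover have "\<forall>k\<in>K. mu' k = 0" "\<exists>k<p. mu' k \<noteq> 0"
      using insert.prems(4) insert.hyps k1 by (auto simp: mu'_def)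
    ultimately obtain u2 where u2: "u2 \<in> orth_compl (insert u1 S)" "\<forall>k\<in>K. bform (M k) u2 u2 = 0"
        "bform (comb mu') u2 u2 = 1"
      using insert.IH[OF S'] insert.prems(2) by blast
    define b where "b = bform (M k1) u2 u2"
    define u where "u = fscale (csqrt b) u1 + fscale (csqrt (- a)) u2"
    have "u \<in> orth_compl S"
      unfolding u_def using u1(1) u2(1) by (rule orth_mixture)
    moreover have "bform (M k) u u = 0" if "k \<in> insert k1 K" for k
      using that orth_mixture(2)[OF u1(1) u2(1), of k] u1(2) u2(2) insert.prems(2)
      by (auto simp: u_def a_def b_def csqrt_mult_self)
    moreover have "bform (comb mu') u2 u2 = b - a * bform (comb mu) u2 u2"
      using k1(1) by (simp add: bform_comb mu'_def b_def left_diff_distrib sum_subtractf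
          sum_distrib_left mult.assoc sum_delta_mult)
    then have "bform (comb mu) u u = 1"
      using orth_mixture(3)[OF u1(1) u2(1)] u1(3) u2(3) by (simp add: u_def csqrt_mult_self)
    ultimately show ?thesis
      by blast
  qed
qed

definition diag_family :: "(nat \<Rightarrow> nat) \<Rightarrow> nat \<Rightarrow> (nat \<Rightarrow> nat \<Rightarrow> complex) \<Rightarrow> bool" where
  "diag_family kd N u \<longleftrightarrow> (\<forall>j<N. finsupp (u j)) \<and>
     (\<forall>j<N. \<forall>j'<N. \<forall>k<p. bform (M k) (u j) (u j') = (if j = j' \<and> k = kd j then 1 else 0))"

lemma diag_family_orth_family:
  assumes u: "diag_family kd N u" and kd: "\<And>j. j < N \<Longrightarrow> kd j < p"
  shows "orth_family (u ` {..<N})"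
  unfolding orth_family_def
proof (intro conjI ballI impI allI)
  fix v assume "v \<in> u ` {..<N}"
  then obtain j where "j < N" "v = u j"
    by auto
  then show "finsupp v" "\<exists>k<p. bform (M k) v v \<noteq> 0"
    using u kd[of j] by (auto simp: diag_family_def intro!: exI[of _ "kd j"])
next
  fix v w k assume "v \<in> u ` {..<N}" "w \<in> u ` {..<N}" "v \<noteq> w" "k < p"
  then show "bform (M k) v w = 0"
    using u by (auto simp: diag_family_def)
qed simp

lemma diag_family_extend:
  assumes u: "diag_family kd N u" and v: "v \<in> orth_compl (u ` {..<N})"
    and "\<And>k. k < p \<Longrightarrow> bform (M k) v v = (if k = kd N then 1 else 0)"
  shows "diag_family kd (Suc N) (u(N := v))"
proof -
  have "bform (M k) (u j) v = 0" "bform (M k) v (u j) = 0" if "j < N" "k < p" for j k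
    using v that bform_M_sym[of k v "u j"] by (auto simp: orth_compl_def)
  then show ?thesis
    using u v assms(3) by (auto simp: diag_family_def orth_compl_def less_Suc_eq)
qed

lemma exists_diag_family:
  assumes "comb_rank_gt ((2 * p - 1) * (N + p - 2))" "\<And>j. j < N \<Longrightarrow> kd j < p"
  shows "\<exists>u. diag_family kd N u"
  using assms
proof (induction N)
  case 0
  show ?case
    by (simp add: diag_family_def)
next
  case (Suc N)
  have kd: "kd N < p"
    using Suc.prems(2) by simp
  have "(2 * p - 1) * (N + p - 2) \<le> (2 * p - 1) * (Suc N + p - 2)"
    by (intro mult_le_mono2) simp
  then have "comb_rank_gt ((2 * p - 1) * (N + p - 2))"
    by (rule comb_rank_gt_mono[OF Suc.prems(1)])
  then obtain u where u: "diag_family kd N u"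
    using Suc.IH Suc.prems(2) by (meson less_SucI)
  define S where "S = u ` {..<N}"
  define K where "K = {..<p} - {kd N}"
  define mu :: "nat \<Rightarrow> complex" where "mu k = (if k = kd N then 1 else 0)" for k
  have S: "orth_family S"
    unfolding S_def using diag_family_orth_family[OF u] Suc.prems(2) by simp
  have "card S + card K \<le> Suc N + p - 2"
    using card_image_le[of "{..<N}" u] kd by (simp add: S_def K_def)
  then have "(2 * p - 1) * (card S + card K) \<le> (2 * p - 1) * (Suc N + p - 2)"
    by (rule mult_le_mono2)
  then have "comb_rank_gt ((2 * p - 1) * (card S + card K))"
    by (rule comb_rank_gt_mono[OF Suc.prems(1)])
  moreover have "finite K" "K \<subseteq> {..<p}" "\<forall>k\<in>K. mu k = 0" "\<exists>k<p. mu k \<noteq> 0"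
    using kd by (auto simp: K_def mu_def)
  ultimately obtain v where v: "v \<in> orth_compl S" "\<forall>k\<in>K. bform (M k) v v = 0"
      "bform (comb mu) v v = 1"
    using exists_prescribed_vector[OF _ S] by blast
  have "bform (comb mu) v v = bform (M (kd N)) v v"
    using kd by (simp add: bform_comb mu_def sum_delta_mult)
  then have "bform (M k) v v = (if k = kd N then 1 else 0)" if "k < p" for k
    using v that by (auto simp: K_def)
  then show ?case
    using diag_family_extend[OF u] v(1) unfolding S_def by blast
qed

lemma comb_rank_gt_if_tuple_rank_gt: "enat r < tuple_rank p M \<Longrightarrow> comb_rank_gt r"
  unfolding comb_rank_gt_def tuple_rank_def comb_def
  by (auto intro: less_le_trans INF_lower)

lemma bform_diag_family_sums:
  assumes u: "diag_family kd N u" and "k < p"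
  shows "bform (M k) (\<Sum>j<N. fscale (c j) (u j)) (\<Sum>j<N. fscale (d j) (u j))
    = (\<Sum>j\<in>{j. j < N \<and> kd j = k}. c j * d j)"
proof -
  have fin: "\<And>j. j < N \<Longrightarrow> finsupp (u j)"
    using u by (simp add: diag_family_def)
  have "bform (M k) (\<Sum>j<N. fscale (c j) (u j)) (\<Sum>j<N. fscale (d j) (u j))
      = (\<Sum>j<N. c j * (\<Sum>j'<N. d j' * bform (M k) (u j) (u j')))"
  proof -
    have "bform (M k) (\<Sum>j<N. fscale (c j) (u j)) (\<Sum>j<N. fscale (d j) (u j))
        = (\<Sum>j<N. bform (M k) (fscale (c j) (u j)) (\<Sum>j'<N. fscale (d j') (u j')))"
      by (rule bform_sum_left) (use fin in auto)
    also have "\<dots> = (\<Sum>j<N. c j * (\<Sum>j'<N. bform (M k) (u j) (fscale (d j') (u j'))))"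
    proof (intro sum.cong refl)
      fix j assume "j \<in> {..<N}"
      have "bform (M k) (u j) (\<Sum>j'<N. fscale (d j') (u j'))
          = (\<Sum>j'<N. bform (M k) (u j) (fscale (d j') (u j')))"
        by (rule bform_sum_right) (use fin in auto)
      then show "bform (M k) (fscale (c j) (u j)) (\<Sum>j'<N. fscale (d j') (u j'))
          = c j * (\<Sum>j'<N. bform (M k) (u j) (fscale (d j') (u j')))"
        using fin \<open>j \<in> {..<N}\<close> by (simp add: bform_scale_left)
    qed
    also have "\<dots> = (\<Sum>j<N. c j * (\<Sum>j'<N. d j' * bform (M k) (u j) (u j')))"
      using fin by (intro sum.cong refl) (simp add: bform_scale_right)
    finally show ?thesis .
  qed
  also have "\<dots> = (\<Sum>j<N. if kd j = k then c j * d j else 0)"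
  proof (intro sum.cong refl)
    fix j assume j: "j \<in> {..<N}"
    have "(\<Sum>j'<N. d j' * bform (M k) (u j) (u j'))
        = (\<Sum>j'<N. if j' = j then (if kd j = k then d j else 0) else 0)"
      using u \<open>k < p\<close> j by (intro sum.cong refl) (auto simp: diag_family_def)
    then show "c j * (\<Sum>j'<N. d j' * bform (M k) (u j) (u j'))
        = (if kd j = k then c j * d j else 0)"
      using j by simp
  qed
  also have "\<dots> = (\<Sum>j\<in>{j. j < N \<and> kd j = k}. c j * d j)"
    by (simp add: sum.If_cases Collect_conj_eq Int_commute lessThan_def)
  finally show ?thesis .
qed

lemma exists_gram_vectors:
  assumes rk: "enat (p * 2 ^ p * l) \<le> tuple_rank p M" and X: "X \<in> sym_l_tuples p l"
  shows "\<exists>b. (\<forall>i<l. finsupp (b i)) \<and> (\<forall>k<p. \<forall>i<l. \<forall>i'<l. bform (M k) (b i) (b i') = X k i i')"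
proof (cases "p = 0 \<or> l = 0")
  case True
  then show ?thesis
    by (intro exI[of _ "\<lambda>i. 0"]) auto
next
  case False
  then have pl: "0 < p" "0 < l"
    by auto
  define N where "N = p * l"
  define kd where "kd j = j div l" for j
  have "comb_rank_gt ((2 * p - 1) * (N + p - 2))"
    unfolding N_def using family_size_bound[OF pl] rk
    by (intro comb_rank_gt_if_tuple_rank_gt) (metis enat_ord_simps(2) order_less_le_trans)
  moreover have "\<And>j. j < N \<Longrightarrow> kd j < p"
    by (simp add: N_def kd_def less_mult_imp_div_less)
  ultimately obtain u where u: "diag_family kd N u"
    using exists_diag_family by blast
  have "\<forall>k. \<exists>c. \<forall>i<l. \<forall>j<l. X k i j = (\<Sum>s<l. c s i * c s j)"
    using X gram_factorizable_sym[of "X _" l] by (simp add: sym_l_tuples_def gram_factorizable_def)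
  then obtain cc where cc: "\<And>k i j. i < l \<Longrightarrow> j < l \<Longrightarrow> X k i j = (\<Sum>s<l. cc k s i * cc k s j)"
    by metis
  define b where "b i = (\<Sum>j<N. fscale (cc (j div l) (j mod l) i) (u j))" for i
  have "finsupp (b i)" for i
    unfolding b_def using u by (intro finsupp_sum) (auto simp: diag_family_def)
  moreover have "bform (M k) (b i) (b i') = X k i i'" if "k < p" "i < l" "i' < l" for k i i'
  proof -
    have "bform (M k) (b i) (b i')
        = (\<Sum>j\<in>{j. j < N \<and> j div l = k}. cc (j div l) (j mod l) i * cc (j div l) (j mod l) i')"
      unfolding b_def using bform_diag_family_sums[OF u that(1)] by (simp add: kd_def)
    also have "\<dots> = (\<Sum>s<l. cc k s i * cc k s i')"
      unfolding N_def div_eq_image[OF that(1) pl(2)] using pl(2)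
      by (subst sum.reindex) (auto simp: inj_on_def)
    finally show ?thesis
      using cc that(2,3) by simp
  qed
  ultimately show ?thesis
    by blast
qed

end

section \<open>Zariski density of the projected orbit\<close>

text \<open>With rows split as \<open>[0,l) \<union> [l,l+N\<^sub>0)\<close> and columns as \<open>[0,N\<^sub>0) \<union> [N\<^sub>0,N\<^sub>0+l)\<close>, the matrix
  \<open>perturbation_mat b N\<^sub>0 l e\<close> is \<open>[[B, e I], [I, 0]]\<close> where the rows of \<open>B\<close> are the \<open>b i\<close>; its
  inverse is \<open>[[0, I], [e\<^sup>-\<^sup>1 I, -e\<^sup>-\<^sup>1 B]]\<close>.\<close>

definition perturbation_mat :: "(nat \<Rightarrow> nat \<Rightarrow> complex) \<Rightarrow> nat \<Rightarrow> nat \<Rightarrow> complex \<Rightarrow> nat \<Rightarrow> nat \<Rightarrow> complex" where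
  "perturbation_mat b N0 l e i a =
    (if i < l then (if a < N0 then b i a else if a = N0 + i then e else 0)
     else (if a = i - l then 1 else 0))"

definition perturbation_mat_inv :: "(nat \<Rightarrow> nat \<Rightarrow> complex) \<Rightarrow> nat \<Rightarrow> nat \<Rightarrow> complex \<Rightarrow> nat \<Rightarrow> nat \<Rightarrow> complex" where
  "perturbation_mat_inv b N0 l e a j =
    (if a < N0 then (if j = a + l then 1 else 0)
     else (if j = a - N0 then 1 / e else if l \<le> j then - b (a - N0) (j - l) / e else 0))"

lemma perturbation_mat_mult_inv:
  assumes e: "e \<noteq> 0" and i: "i < N0 + l" and j: "j < N0 + l"
  shows "(\<Sum>k<N0 + l. perturbation_mat b N0 l e i k * perturbation_mat_inv b N0 l e k j) = (if i = j then 1 else 0)"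
proof (cases "i < l")
  case True
  have "(\<Sum>k<N0 + l. perturbation_mat b N0 l e i k * perturbation_mat_inv b N0 l e k j) =
        (\<Sum>k<N0 + l. (if k = j - l then (if l \<le> j \<and> j - l < N0 then b i (j - l) else 0) else 0)
                     + (if k = N0 + i then e * perturbation_mat_inv b N0 l e k j else 0))"
  proof (intro sum.cong refl)
    fix k assume "k \<in> {..<N0 + l}"
    show "perturbation_mat b N0 l e i k * perturbation_mat_inv b N0 l e k j =
      (if k = j - l then (if l \<le> j \<and> j - l < N0 then b i (j - l) else 0) else 0)
                     + (if k = N0 + i then e * perturbation_mat_inv b N0 l e k j else 0)"
      using True by (cases "k < N0") (auto simp: perturbation_mat_def perturbation_mat_inv_def)
  qed
  also have "\<dots> = (if l \<le> j \<and> j - l < N0 then b i (j - l) else 0) + e * perturbation_mat_inv b N0 l e (N0 + i) j"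
    using True j by (simp add: sum.distrib)
  also have "\<dots> = (if i = j then 1 else 0)"
    using True j e by (auto simp: perturbation_mat_inv_def)
  finally show ?thesis .
next
  case False
  have "(\<Sum>k<N0 + l. perturbation_mat b N0 l e i k * perturbation_mat_inv b N0 l e k j) =
        (\<Sum>k<N0 + l. if k = i - l then perturbation_mat_inv b N0 l e k j else 0)"
    using False by (intro sum.cong refl) (auto simp: perturbation_mat_def)
  also have "\<dots> = perturbation_mat_inv b N0 l e (i - l) j"
  proof -
    have "i - l \<in> {..<N0 + l}" using i by auto
    then show ?thesis by simp
  qed
  also have "\<dots> = (if i = j then 1 else 0)" using i False by (auto simp: perturbation_mat_inv_def)
  finally show ?thesis .
qed

lemma perturbation_mat_inv_mult:
  assumes e: "e \<noteq> 0" and i: "i < N0 + l" and j: "j < N0 + l"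
  shows "(\<Sum>k<N0 + l. perturbation_mat_inv b N0 l e i k * perturbation_mat b N0 l e k j) = (if i = j then 1 else 0)"
proof (cases "i < N0")
  case True
  have "(\<Sum>k<N0 + l. perturbation_mat_inv b N0 l e i k * perturbation_mat b N0 l e k j) =
        (\<Sum>k<N0 + l. if k = i + l then perturbation_mat b N0 l e k j else 0)"
    using True by (intro sum.cong refl) (auto simp: perturbation_mat_inv_def)
  also have "\<dots> = perturbation_mat b N0 l e (i + l) j" using True by simp
  also have "\<dots> = (if i = j then 1 else 0)" by (auto simp: perturbation_mat_def)
  finally show ?thesis .
next
  case False
  define i' where "i' = i - N0"
  have i': "i' < l" "i = N0 + i'"
    using i False by (simp_all add: i'_def)
  have row: "perturbation_mat_inv b N0 l e i k = (if k = i' then 1 / e else if l \<le> k then - b i' (k - l) / e else 0)"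
    for k
    using False by (simp add: perturbation_mat_inv_def i'_def)
  have "perturbation_mat_inv b N0 l e i k * perturbation_mat b N0 l e k j
      = (if k = i' then perturbation_mat b N0 l e i' j / e else 0) + (if k = j + l then - b i' j / e else 0)" for k
    using i'(1) by (cases "k = i'"; cases "l \<le> k") (auto simp: row perturbation_mat_def)
  then have "(\<Sum>k<N0 + l. perturbation_mat_inv b N0 l e i k * perturbation_mat b N0 l e k j)
      = perturbation_mat b N0 l e i' j / e + (if j < N0 then - b i' j / e else 0)"
    using i' j by (simp add: sum.distrib)
  also have "\<dots> = (if i = j then 1 else 0)"
    using i' e by (simp add: perturbation_mat_def)
  finally show ?thesis .
qed

lemma invertible_perturbation_mat:
  assumes "e \<noteq> 0"
  shows "invertible_n (N0 + l) (perturbation_mat b N0 l e)"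
  unfolding invertible_n_def using perturbation_mat_mult_inv[OF assms] perturbation_mat_inv_mult[OF assms]
  by (intro exI[of _ "perturbation_mat_inv b N0 l e"]) simp

lemma perturbation_mat_row:
  assumes "supp (b i) \<subseteq> {..<N0}" "i < l"
  shows "embed_gl (N0 + l) (perturbation_mat b N0 l e) i = b i + fscale e (unit_vec (N0 + i))"
proof
  fix a
  have "N0 \<le> a \<Longrightarrow> b i a = 0"
    using assms(1) by (auto simp: supp_def)
  then show "embed_gl (N0 + l) (perturbation_mat b N0 l e) i a = (b i + fscale e (unit_vec (N0 + i))) a"
    using assms(2) by (auto simp: embed_gl_def perturbation_mat_def fscale_apply unit_vec_def)
qed

lemma congr_act_eq_bform: "congr_act g A i j = bform A (g i) (g j)"
  by (simp add: congr_act_def bform_def supp_def)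

lemma poly_fun_tendsto:
  "f \<in> poly_fun \<Longrightarrow> (\<And>k i j. (\<lambda>m. Y m k i j) \<longlonglongrightarrow> X k i j) \<Longrightarrow> (\<lambda>m. f (Y m)) \<longlonglongrightarrow> f X"
  by (induction f rule: poly_fun.induct) (auto intro: tendsto_add tendsto_mult)

lemma zariski_dense_if_limits:
  assumes "S \<subseteq> V"
    and "\<And>X. X \<in> V \<Longrightarrow> \<exists>Y. (\<forall>m. Y m \<in> S) \<and> (\<forall>k i j. (\<lambda>m. Y m k i j) \<longlonglongrightarrow> X k i j)"
  shows "zariski_dense_in S V"
  unfolding zariski_dense_in_def
proof (intro conjI ballI impI assms(1))
  fix f X assume f: "f \<in> poly_fun" and van: "\<forall>Y\<in>S. f Y = 0" and "X \<in> V"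
  then obtain Y where Y: "\<And>m. Y m \<in> S" "\<And>k i j. (\<lambda>m. Y m k i j) \<longlonglongrightarrow> X k i j"
    using assms(2) by blast
  have "(\<lambda>m. f (Y m)) \<longlonglongrightarrow> f X"
    using f Y(2) by (rule poly_fun_tendsto)
  moreover have "(\<lambda>m. f (Y m)) \<longlonglongrightarrow> 0"
    using van Y(1) by simp
  ultimately show "f X = 0"
    using LIMSEQ_unique by blast
qed

context sym_tuple
begin

lemma proj_orbit_subset: "proj_block p l ` orbit p M \<subseteq> sym_l_tuples p l"
proof
  fix Y assume "Y \<in> proj_block p l ` orbit p M"
  then obtain g where Y: "Y = proj_block p l (\<lambda>k. if k < p then congr_act g (M k) else (\<lambda>i j. 0))"
    by (auto simp: orbit_def)
  have "congr_act g (M k) i j = congr_act g (M k) j i" if "k < p" for k i j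
    using bform_M_sym[OF that] by (simp add: congr_act_eq_bform)
  then show "Y \<in> sym_l_tuples p l"
    unfolding sym_l_tuples_def Y proj_block_def by auto
qed

lemma proj_orbit_approximates:
  assumes X: "X \<in> sym_l_tuples p l" and b: "\<And>i. i < l \<Longrightarrow> finsupp (b i)"
    and bX: "\<And>k i j. k < p \<Longrightarrow> i < l \<Longrightarrow> j < l \<Longrightarrow> bform (M k) (b i) (b j) = X k i j"
  shows "\<exists>Y. (\<forall>m. Y m \<in> proj_block p l ` orbit p M) \<and> (\<forall>k i j. (\<lambda>m. Y m k i j) \<longlonglongrightarrow> X k i j)"
proof -
  obtain N0 where N0: "(\<Union>i<l. supp (b i)) \<subseteq> {..<N0}"
    using b finite_nat_iff_bounded[of "\<Union>i<l. supp (b i)"] by auto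
  define e :: "nat \<Rightarrow> complex" where "e m = inverse (of_nat (Suc m))" for m
  have e0: "e m \<noteq> 0" for m
    by (simp add: e_def del: of_nat_Suc)
  have e_lim: "e \<longlonglongrightarrow> 0"
    unfolding e_def by (rule LIMSEQ_Suc[OF lim_inverse_n])
  define G where "G m = embed_gl (N0 + l) (perturbation_mat b N0 l (e m))" for m
  define Y where "Y m = proj_block p l (\<lambda>k. if k < p then congr_act (G m) (M k) else (\<lambda>i j. 0))" for m
  have "G m \<in> G_inf" for m
    unfolding G_def G_inf_def using invertible_perturbation_mat[OF e0] by blast
  then have "Y m \<in> proj_block p l ` orbit p M" for m
    unfolding Y_def orbit_def by blast
  moreover have "(\<lambda>m. Y m k i j) \<longlonglongrightarrow> X k i j" for k i j
  proof (cases "k < p \<and> i < l \<and> j < l")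
    case True
    define w where "w i = unit_vec (N0 + i)" for i
    have row: "G m i' = b i' + fscale (e m) (w i')" if "i' < l" for m i'
      unfolding G_def w_def using N0 that by (intro perturbation_mat_row) auto
    have fin_w: "finsupp (w i')" for i'
      by (simp add: w_def)
    have "Y m k i j = X k i j + e m * (bform (M k) (b i) (w j) + bform (M k) (w i) (b j))
        + e m * e m * bform (M k) (w i) (w j)" for m
    proof -
      have "Y m k i j = bform (M k) (G m i) (G m j)"
        using True by (simp add: Y_def proj_block_def congr_act_eq_bform)
      also have "\<dots> = bform (M k) (b i + fscale (e m) (w i)) (b j + fscale (e m) (w j))"
        using True by (simp add: row)
      also have "\<dots> = X k i j + e m * (bform (M k) (b i) (w j) + bform (M k) (w i) (b j))
          + e m * e m * bform (M k) (w i) (w j)"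
        using True b[of i] b[of j] fin_w bX[of k i j] by (simp add: bform_perturb)
      finally show ?thesis .
    qed
    moreover have "(\<lambda>m. X k i j + e m * C1 + e m * e m * C2) \<longlonglongrightarrow> X k i j + 0 * C1 + 0 * 0 * C2"
      for C1 C2
      by (intro tendsto_intros e_lim)
    ultimately show ?thesis
      by simp
  next
    case False
    then have "Y m k i j = 0" "X k i j = 0" for m
      using X by (auto simp: Y_def proj_block_def sym_l_tuples_def)
    then show ?thesis
      by simp
  qed
  ultimately show ?thesis
    by blast
qed

end

theorem lemma3p9:
  fixes p l :: nat and M :: "nat \<Rightarrow> nat \<Rightarrow> nat \<Rightarrow> complex"
  assumes "M \<in> sym_inf_tuples p"
    and "tuple_rank p M \<ge> enat (p * 2 ^ p * l)"
  shows "zariski_dense_in (proj_block p l ` orbit p M) (sym_l_tuples p l)"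
proof -
  interpret sym_tuple p M
    using assms(1) by unfold_locales (auto simp: sym_inf_tuples_def sym_inf_def)
  show ?thesis
  proof (rule zariski_dense_if_limits[OF proj_orbit_subset])
    fix X assume X: "X \<in> sym_l_tuples p l"
    obtain b where "\<And>i. i < l \<Longrightarrow> finsupp (b i)"
        "\<And>k i j. k < p \<Longrightarrow> i < l \<Longrightarrow> j < l \<Longrightarrow> bform (M k) (b i) (b j) = X k i j"
      using exists_gram_vectors[OF assms(2) X] by blast
    then show "\<exists>Y. (\<forall>m. Y m \<in> proj_block p l ` orbit p M) \<and> (\<forall>k i j. (\<lambda>m. Y m k i j) \<longlonglongrightarrow> X k i j)"
      by (rule proj_orbit_approximates[OF X])
  qed
qed

end
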